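(* For the RHA process and every $j\ge1$, $$\inf_{n\in\mathbb N}2^{-n}H(X^n_j)=h,\qquad\text{where } h:=\inf_{l\in\mathbb N}2^{-l}\log k_l=\lim_{l\to\infty}2^{-l}\log k_l.$$
   Context: Random hierarchical association (RHA) process. Fix positive integers $(k_n)_{n\ge0}$ (perplexities) with $k_{n-1}\le k_n\le k_{n-1}^2$ for all $n\ge1$. On a probability space $(\Omega,\mathcal J,P)$ let, for each $n\ge1$, $(L_{nj},R_{nj})_{j=1}^{k_n}$ be the lexicographically sorted enumeration of a uniformly random $k_n$-element subset of $\{1,\dots,k_{n-1}\}^2$ (each of the $\binom{k_{n-1}^2}{k_n}$ subsets equally likely), independently over $n$. Let $(C_n)_{n\ge0}$ be independent, independent of all $(L_{nj},R_{nj})$, with $C_n$ uniform on $\{1,\dots,k_n\}$. Define strings $Y^0_j=j$ (length 1) for $1\le j\le k_0$ and $Y^n_j=Y^{n-1}_{L_{nj}}Y^{n-1}_{R_{nj}}$ (concatenation). The RHA process is $\mathcal X=Y^0_{C_0}Y^1_{C_1}Y^2_{C_2}\cdots=X_1X_2X_3\cdots$, $X_{k:l}=X_k\cdots X_l$; for $n\ge0$, $j\ge1$, $X^n_j=X_{j2^n:(j+1)2^n-1}$. $H(X)=\mathbb E_P[-\log P(X)]$ with natural logarithm. The quantity $h$ is called the combinatorial entropy rate. *)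

theory Defs
  imports "HOL-Probability.Probability"
begin

definition lex_less :: "nat \<times> nat \<Rightarrow> nat \<times> nat \<Rightarrow> bool" where
  "lex_less p q \<longleftrightarrow> fst p < fst q \<or> (fst p = fst q \<and> snd p < snd q)"

text \<open>Lexicographically sorted enumeration of a finite set of pairs (as a list,
  so that the j-th element, j \<ge> 1, is at list index j - 1).\<close>
definition lex_enum :: "(nat \<times> nat) set \<Rightarrow> (nat \<times> nat) list" where
  "lex_enum A = (THE xs. sorted_wrt lex_less xs \<and> set xs = A)"

definition perplexities :: "(nat \<Rightarrow> nat) \<Rightarrow> bool" where
  "perplexities k \<longleftrightarrow> (\<forall>n. k n > 0) \<and> (\<forall>n\<ge>1. k (n-1) \<le> k n \<and> k n \<le> (k (n-1))^2)"

definition subsets_RHA :: "(nat \<Rightarrow> nat) \<Rightarrow> nat \<Rightarrow> (nat \<times> nat) set set" where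
  "subsets_RHA k n = {A. A \<subseteq> {1..k (n-1)} \<times> {1..k (n-1)} \<and> card A = k n}"

text \<open>Strings Y^n_i, given the realised pair sets S n (n \<ge> 1):
  Y^0_i = [i], Y^n_i = Y^{n-1}_{L_{ni}} Y^{n-1}_{R_{ni}}.\<close>
primrec Ystr :: "(nat \<Rightarrow> (nat \<times> nat) set) \<Rightarrow> nat \<Rightarrow> nat \<Rightarrow> nat list" where
  "Ystr S 0 i = [i]"
| "Ystr S (Suc n) i =
     Ystr S n (fst (lex_enum (S (Suc n)) ! (i - 1))) @ Ystr S n (snd (lex_enum (S (Suc n)) ! (i - 1)))"

definition RHA_prefix :: "(nat \<Rightarrow> (nat \<times> nat) set) \<Rightarrow> (nat \<Rightarrow> nat) \<Rightarrow> nat \<Rightarrow> nat list" where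
  "RHA_prefix S c m = concat (map (\<lambda>i. Ystr S i (c i)) [0..<m])"

text \<open>The symbol X_t (t \<ge> 1) of the infinite concatenation; the prefix of
  Suc t blocks has length 2^(Suc t) - 1 \<ge> t.\<close>
definition RHA_X :: "(nat \<Rightarrow> (nat \<times> nat) set) \<Rightarrow> (nat \<Rightarrow> nat) \<Rightarrow> nat \<Rightarrow> nat" where
  "RHA_X S c t = RHA_prefix S c (Suc t) ! (t - 1)"

definition RHA_block :: "(nat \<Rightarrow> (nat \<times> nat) set) \<Rightarrow> (nat \<Rightarrow> nat) \<Rightarrow> nat \<Rightarrow> nat \<Rightarrow> nat list" where
  "RHA_block S c n j = map (RHA_X S c) [j * 2^n ..< (j+1) * 2^n]"

definition entropy_nat :: "'a measure \<Rightarrow> ('a \<Rightarrow> 'b) \<Rightarrow> real" where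
  "entropy_nat M X = (\<integral>\<omega>. - ln (measure M {\<omega>' \<in> space M. X \<omega>' = X \<omega>}) \<partial>M)"

text \<open>The random data of the RHA process on a probability space M:
  S n (n \<ge> 1) is the random set {(L_{nj},R_{nj})}, uniform over the k_n-element subsets
  of {1..k_{n-1}}^2; C n is uniform on {1..k_n}; all of them are mutually independent.\<close>
definition RHA_model :: "'a measure \<Rightarrow> (nat \<Rightarrow> nat) \<Rightarrow> (nat \<Rightarrow> 'a \<Rightarrow> (nat \<times> nat) set) \<Rightarrow> (nat \<Rightarrow> 'a \<Rightarrow> nat) \<Rightarrow> bool" where
  "RHA_model M k S C \<longleftrightarrow>
     prob_space M \<and>
     (\<forall>n\<ge>1. S n \<in> measurable M (count_space UNIV) \<and>
             (\<forall>\<omega>\<in>space M. S n \<omega> \<in> subsets_RHA k n) \<and>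
             (\<forall>A\<in>subsets_RHA k n. measure M {\<omega> \<in> space M. S n \<omega> = A} = 1 / real (card (subsets_RHA k n)))) \<and>
     (\<forall>n. C n \<in> measurable M (count_space UNIV) \<and>
          (\<forall>\<omega>\<in>space M. C n \<omega> \<in> {1..k n}) \<and>
          (\<forall>c\<in>{1..k n}. measure M {\<omega> \<in> space M. C n \<omega> = c} = 1 / real (k n))) \<and>
     prob_space.indep_vars M (\<lambda>_. count_space UNIV)
        (\<lambda>i \<omega>. case i of Inl n \<Rightarrow> Inl (S n \<omega>) | Inr n \<Rightarrow> Inr (C n \<omega>))
        (Inl ` {1..} \<union> range Inr)"

end

theory Submission
  imports Defs
begin

text \<open>Write \<open>2\<^sup>p \<le> j < 2\<^sup>p\<^sup>+\<^sup>1\<close>. The block \<open>X\<^sup>n\<^sub>j\<close> is the string \<open>Y\<^sup>n\<^sub>i\<close> whose index \<open>i\<close> is reached from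
  \<open>C\<^sub>n\<^sub>+\<^sub>p\<close> by descending \<open>p\<close> levels through the random pair sets along the binary digits of
  \<open>j - 2\<^sup>p\<close>, so \<open>X\<^sup>n\<^sub>j\<close> is a function of the uniformly distributed tuple
  \<open>(S\<^sub>1, \<dots>, S\<^sub>n\<^sub>+\<^sub>p, C\<^sub>n\<^sub>+\<^sub>p)\<close>.

  A uniformly random pair of a uniformly random \<open>k\<^sub>t\<close>-subset of \<open>{1..k\<^sub>t\<^sub>-\<^sub>1}\<^sup>2\<close> has uniform
  coordinates, so even conditionally on \<open>S\<^sub>1, \<dots>, S\<^sub>n\<close> the index \<open>i\<close> is uniform on \<open>{1..k\<^sub>n}\<close>.
  Since \<open>i \<mapsto> Y\<^sup>n\<^sub>i\<close> is injective, every value of \<open>X\<^sup>n\<^sub>j\<close> has probability at most \<open>1/k\<^sub>n\<close>,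
  whence \<open>H(X\<^sup>n\<^sub>j) \<ge> log k\<^sub>n\<close>. Conversely, for \<open>l \<le> n\<close> the block \<open>X\<^sup>n\<^sub>j\<close> is a concatenation of
  \<open>2\<^sup>n\<^sup>-\<^sup>l\<close> strings \<open>Y\<^sup>l\<^sub>i\<close>, hence determined by \<open>S\<^sub>1, \<dots>, S\<^sub>l\<close> and \<open>2\<^sup>n\<^sup>-\<^sup>l\<close> indices in
  \<open>{1..k\<^sub>l}\<close>; this bounds \<open>H(X\<^sup>n\<^sub>j)\<close> by \<open>2\<^sup>n\<^sup>-\<^sup>l log k\<^sub>l\<close> plus a constant depending only on \<open>l\<close>.
  Dividing by \<open>2\<^sup>n\<close>, both infima agree; \<open>2\<^sup>-\<^sup>l log k\<^sub>l\<close> decreases because \<open>k\<^sub>l \<le> k\<^sub>l\<^sub>-\<^sub>1\<^sup>2\<close>.\<close>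

section \<open>The strings \<open>Y\<^sup>n\<^sub>i\<close> and their blocks\<close>

lemma length_Ystr [simp]: "length (Ystr s n i) = 2 ^ n"
  by (induction n arbitrary: i) auto

lemma Ystr_cong: "(\<And>u. u \<in> {1..n} \<Longrightarrow> s u = s' u) \<Longrightarrow> Ystr s n i = Ystr s' n i"
  by (induction n arbitrary: i) simp_all

definition branch :: "bool \<Rightarrow> nat \<times> nat \<Rightarrow> nat" where
  "branch left p = (if left then fst p else snd p)"

text \<open>\<open>descendant s n q i r\<close> is the index \<open>i'\<close> such that the \<open>r\<close>-th block of length \<open>2\<^sup>n\<close>
  of \<open>Y\<^sup>n\<^sup>+\<^sup>q\<^sub>i\<close> is \<open>Y\<^sup>n\<^sub>i\<^sub>'\<close>; it is obtained by descending \<open>q\<close> levels, reading off the binary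
  digits of \<open>r < 2\<^sup>q\<close> from the most significant one.\<close>
fun descendant :: "(nat \<Rightarrow> (nat \<times> nat) set) \<Rightarrow> nat \<Rightarrow> nat \<Rightarrow> nat \<Rightarrow> nat \<Rightarrow> nat" where
  "descendant s n 0 i r = i"
| "descendant s n (Suc q) i r =
     descendant s n q (branch (r < 2 ^ q) (lex_enum (s (Suc (n + q))) ! (i - 1))) (r mod 2 ^ q)"

lemma descendant_cong:
  "(\<And>u. u \<in> {Suc n..n + q} \<Longrightarrow> s u = s' u) \<Longrightarrow> descendant s n q i r = descendant s' n q i r"
  by (induction q arbitrary: i r) simp_all

lemma Ystr_block_eq_descendant:
  "r < 2 ^ q \<Longrightarrow> take (2 ^ n) (drop (r * 2 ^ n) (Ystr s (n + q) i)) = Ystr s n (descendant s n q i r)"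
proof (induction q arbitrary: i r)
  case 0
  then show ?case by simp
next
  case (Suc q)
  define p where "p = lex_enum (s (Suc (n + q))) ! (i - 1)"
  define A where "A = Ystr s (n + q) (fst p)"
  define B where "B = Ystr s (n + q) (snd p)"
  have Y: "Ystr s (n + Suc q) i = A @ B"
    by (simp add: A_def B_def p_def)
  have length_A: "length A = 2 ^ q * 2 ^ n"
    by (simp add: A_def power_add mult.commute)
  show ?case
  proof (cases "r < 2 ^ q")
    case True
    have "(r + 1) * 2 ^ n \<le> 2 ^ q * 2 ^ n"
      using True by (intro mult_right_mono) auto
    then have "r * 2 ^ n + 2 ^ n \<le> length A"
      by (simp add: length_A algebra_simps)
    then have "take (2 ^ n) (drop (r * 2 ^ n) (A @ B)) = take (2 ^ n) (drop (r * 2 ^ n) A)"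
      by (simp add: take_append)
    also have "\<dots> = Ystr s n (descendant s n q (fst p) r)"
      using Suc.IH[OF True] by (simp add: A_def)
    also have "descendant s n q (fst p) r = descendant s n (Suc q) i r"
      using True by (simp add: p_def branch_def)
    finally show ?thesis
      unfolding Y .
  next
    case False
    have "r * 2 ^ n = length A + (r - 2 ^ q) * 2 ^ n"
      using False by (simp add: length_A diff_mult_distrib)
    then have "drop (r * 2 ^ n) (A @ B) = drop ((r - 2 ^ q) * 2 ^ n) B"
      by simp
    moreover have "r mod 2 ^ q = r - 2 ^ q" "r - 2 ^ q < 2 ^ q"
      using False Suc.prems by (simp_all add: le_mod_geq)
    ultimately have "take (2 ^ n) (drop (r * 2 ^ n) (A @ B)) = Ystr s n (descendant s n q (snd p) (r mod 2 ^ q))"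
      using Suc.IH by (simp add: B_def)
    also have "descendant s n q (snd p) (r mod 2 ^ q) = descendant s n (Suc q) i r"
      using False by (simp add: p_def branch_def)
    finally show ?thesis
      unfolding Y .
  qed
qed

lemma concat_map_take_drop: "concat (map (\<lambda>r. take b (drop (r * b) xs)) [0..<a]) = take (a * b) xs"
proof (induction a)
  case (Suc a)
  have "take (Suc a * b) xs = take (a * b) xs @ take b (drop (a * b) xs)"
    by (metis add.commute mult_Suc take_add)
  then show ?case using Suc by simp
qed simp

lemma Ystr_eq_concat_descendants:
  assumes "l \<le> n"
  shows "Ystr s n i = concat (map (\<lambda>r. Ystr s l (descendant s l (n - l) i r)) [0..<2 ^ (n - l)])"
proof -
  have "concat (map (\<lambda>r. Ystr s l (descendant s l (n - l) i r)) [0..<2 ^ (n - l)])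
      = concat (map (\<lambda>r. take (2 ^ l) (drop (r * 2 ^ l) (Ystr s (l + (n - l)) i))) [0..<2 ^ (n - l)])"
    by (intro arg_cong[where f = concat] map_cong) (auto simp: Ystr_block_eq_descendant)
  also have "\<dots> = Ystr s n i"
    using assms by (simp add: concat_map_take_drop flip: power_add)
  finally show ?thesis ..
qed

lemma RHA_prefix_Suc: "RHA_prefix s c (Suc m) = RHA_prefix s c m @ Ystr s m (c m)"
  by (simp add: RHA_prefix_def)

lemma length_RHA_prefix: "length (RHA_prefix s c m) = 2 ^ m - 1"
proof (induction m)
  case (Suc m)
  have "(1::nat) \<le> 2 ^ m"
    by simp
  with Suc show ?case
    by (simp add: RHA_prefix_Suc)
qed (simp add: RHA_prefix_def)

lemma RHA_prefix_add:
  "RHA_prefix s c (m + d) = RHA_prefix s c m @ concat (map (\<lambda>i. Ystr s i (c i)) [m..<m + d])"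
  by (induction d) (auto simp: RHA_prefix_Suc)

lemma RHA_X_eq_nth_Ystr:
  assumes "2 ^ m \<le> t" "t < 2 ^ Suc m"
  shows "RHA_X s c t = Ystr s m (c m) ! (t - 2 ^ m)"
proof -
  have "m < t"
    using assms(1) less_le_trans[OF less_exp] by blast
  then have "RHA_prefix s c (Suc t) = (RHA_prefix s c m @ Ystr s m (c m)) @
      concat (map (\<lambda>i. Ystr s i (c i)) [Suc m..<Suc t])"
    using RHA_prefix_add[of s c "Suc m" "t - m"] RHA_prefix_Suc[of s c m] by simp
  moreover have "t - 1 < length (RHA_prefix s c m @ Ystr s m (c m))"
    using assms by (simp add: length_RHA_prefix)
  ultimately have "RHA_X s c t = (RHA_prefix s c m @ Ystr s m (c m)) ! (t - 1)"
    unfolding RHA_X_def by (simp only: nth_append_left)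
  also have "\<dots> = Ystr s m (c m) ! (t - 1 - (2 ^ m - 1))"
  proof -
    have "length (RHA_prefix s c m) \<le> t - 1"
      using assms(1) by (simp add: length_RHA_prefix)
    then show ?thesis
      by (simp only: nth_append_right length_RHA_prefix)
  qed
  also have "t - 1 - (2 ^ m - 1) = t - 2 ^ m"
    using assms(1) Nat.diff_diff_right[of 1 "2 ^ m" t] by simp
  finally show ?thesis .
qed

lemma RHA_block_eq_Ystr_descendant:
  assumes "2 ^ p \<le> j" "j < 2 ^ Suc p"
  shows "RHA_block s c n j = Ystr s n (descendant s n p (c (n + p)) (j - 2 ^ p))"
proof (rule nth_equalityI)
  show "length (RHA_block s c n j) = length (Ystr s n (descendant s n p (c (n + p)) (j - 2 ^ p)))"
    by (simp add: RHA_block_def algebra_simps)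
next
  fix u assume "u < length (RHA_block s c n j)"
  then have u: "u < 2 ^ n"
    by (simp add: RHA_block_def algebra_simps)
  have r: "j - 2 ^ p < 2 ^ p"
    using assms by simp
  have "2 ^ (n + p) \<le> j * 2 ^ n"
    unfolding power_add using assms(1) by (simp add: mult.commute)
  then have t1: "2 ^ (n + p) \<le> j * 2 ^ n + u"
    by simp
  have "(j + 1) * 2 ^ n \<le> 2 ^ Suc p * 2 ^ n"
    using assms(2) by (intro mult_right_mono) auto
  then have t2: "j * 2 ^ n + u < 2 ^ Suc (n + p)"
    using u by (simp add: power_add algebra_simps)
  have "(j - 2 ^ p + 1) * 2 ^ n \<le> 2 ^ p * 2 ^ n"
    using r by (intro mult_right_mono) auto
  then have "(j - 2 ^ p) * 2 ^ n + u < 2 ^ (n + p)"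
    using u by (simp add: power_add algebra_simps)
  moreover have "j * 2 ^ n + u - 2 ^ (n + p) = (j - 2 ^ p) * 2 ^ n + u"
    using assms(1) by (simp add: power_add diff_mult_distrib algebra_simps)
  ultimately show "RHA_block s c n j ! u = Ystr s n (descendant s n p (c (n + p)) (j - 2 ^ p)) ! u"
    using u RHA_X_eq_nth_Ystr[OF t1 t2] Ystr_block_eq_descendant[OF r, where n = n and s = s and i = "c (n + p)", symmetric]
    by (simp add: RHA_block_def algebra_simps)
qed

section \<open>Lexicographic enumeration and the ranges of indices\<close>

lemma lex_linorder: "class.linorder (\<lambda>p q. lex_less p q \<or> p = q) lex_less"
  by unfold_locales (auto simp: lex_less_def)

lemma lex_enum:
  assumes "finite A"
  shows "sorted_wrt lex_less (lex_enum A)" "set (lex_enum A) = A"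
proof -
  have "sorted_wrt lex_less (lex_enum A) \<and> set (lex_enum A) = A"
    unfolding lex_enum_def
    by (rule theI') (rule linorder.ex1_sorted_list_for_set_if_finite[OF lex_linorder assms])
  then show "sorted_wrt lex_less (lex_enum A)" "set (lex_enum A) = A"
    by auto
qed

lemma distinct_lex_enum: "finite A \<Longrightarrow> distinct (lex_enum A)"
  using linorder.strict_sorted_iff[OF lex_linorder] lex_enum by blast

lemma finite_subsets_RHA: "finite (subsets_RHA k t)"
  by (rule finite_subset[of _ "Pow ({1..k (t - 1)} \<times> {1..k (t - 1)})"]) (auto simp: subsets_RHA_def)

lemma finite_if_subsets_RHA: "A \<in> subsets_RHA k t \<Longrightarrow> finite A"
  by (auto simp: subsets_RHA_def intro: finite_subset)

lemma bij_betw_lex_enum_nth: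
  assumes "A \<in> subsets_RHA k t"
  shows "bij_betw (\<lambda>c. lex_enum A ! (c - 1)) {1..k t} A"
proof -
  have "finite A"
    using assms by (rule finite_if_subsets_RHA)
  then have "bij_betw ((!) (lex_enum A)) {..<k t} A"
    using assms distinct_lex_enum lex_enum(2) distinct_card
    by (intro bij_betw_nth) (fastforce simp: subsets_RHA_def)+
  moreover have "bij_betw (\<lambda>c. c - 1) {1..k t} {..<k t}"
    by (rule bij_betwI[where g = "\<lambda>c. c + 1"]) auto
  ultimately show ?thesis
    using bij_betw_trans by (fastforce simp: comp_def)
qed

lemma branch_lex_enum_nth_range:
  assumes "A \<in> subsets_RHA k t" "c \<in> {1..k t}"
  shows "branch left (lex_enum A ! (c - 1)) \<in> {1..k (t - 1)}"
proof -
  have "lex_enum A ! (c - 1) \<in> A"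
    using bij_betw_apply[OF bij_betw_lex_enum_nth[OF assms(1)] assms(2)] .
  with assms(1) show ?thesis
    by (auto simp: subsets_RHA_def branch_def)
qed

lemma descendant_range:
  assumes "\<And>u. u \<in> {Suc n..n + q} \<Longrightarrow> s u \<in> subsets_RHA k u" "i \<in> {1..k (n + q)}"
  shows "descendant s n q i r \<in> {1..k n}"
  using assms
proof (induction q arbitrary: i r)
  case (Suc q)
  then have "branch (r < 2 ^ q) (lex_enum (s (Suc (n + q))) ! (i - 1)) \<in> {1..k (n + q)}"
    using branch_lex_enum_nth_range[of "s (Suc (n + q))" k "Suc (n + q)" i] by simp
  with Suc show ?case
    by simp
qed simp

lemma inj_on_Ystr:
  assumes "\<And>u. u \<in> {1..n} \<Longrightarrow> s u \<in> subsets_RHA k u"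
  shows "inj_on (Ystr s n) {1..k n}"
  using assms
proof (induction n)
  case 0
  then show ?case by (simp add: inj_on_def)
next
  case (Suc n)
  define A where "A = s (Suc n)"
  have A: "A \<in> subsets_RHA k (Suc n)"
    using Suc.prems unfolding A_def by auto
  have IH: "inj_on (Ystr s n) {1..k n}"
    using Suc by simp
  show ?case
  proof (rule inj_onI)
    fix i i' assume i: "i \<in> {1..k (Suc n)}" and i': "i' \<in> {1..k (Suc n)}"
      and eq: "Ystr s (Suc n) i = Ystr s (Suc n) i'"
    have "branch left (lex_enum A ! (i - 1)) = branch left (lex_enum A ! (i' - 1))" for left
    proof -
      have "Ystr s n (branch left (lex_enum A ! (i - 1))) = Ystr s n (branch left (lex_enum A ! (i' - 1)))"
        using eq by (cases left) (simp_all add: A_def branch_def)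
      then show ?thesis
        using inj_onD[OF IH] branch_lex_enum_nth_range[OF A] i i' by simp
    qed
    then have "lex_enum A ! (i - 1) = lex_enum A ! (i' - 1)"
      unfolding branch_def by (metis prod_eqI)
    then show "i = i'"
      using bij_betw_imp_inj_on[OF bij_betw_lex_enum_nth[OF A]] i i' by (auto dest: inj_onD)
  qed
qed

section \<open>Counting configurations\<close>

lemma card_subsets_containing:
  assumes "finite G" "x \<in> G" "m \<ge> 1"
  shows "card {A. A \<subseteq> G \<and> card A = m \<and> x \<in> A} = (card G - 1) choose (m - 1)"
proof -
  have "{A. A \<subseteq> G \<and> card A = m \<and> x \<in> A} = insert x ` {B. B \<subseteq> G - {x} \<and> card B = m - 1}"
  proof (intro equalityI subsetI)
    fix A assume A: "A \<in> {A. A \<subseteq> G \<and> card A = m \<and> x \<in> A}"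
    then have "A - {x} \<in> {B. B \<subseteq> G - {x} \<and> card B = m - 1}"
      using finite_subset[OF _ assms(1)] by auto
    moreover have "A = insert x (A - {x})"
      using A by auto
    ultimately show "A \<in> insert x ` {B. B \<subseteq> G - {x} \<and> card B = m - 1}"
      by blast
  next
    fix A assume "A \<in> insert x ` {B. B \<subseteq> G - {x} \<and> card B = m - 1}"
    then obtain B where B: "B \<subseteq> G - {x}" "card B = m - 1" "A = insert x B"
      by auto
    moreover have "finite B" "x \<notin> B"
      using B(1) assms(1) by (auto intro: finite_subset)
    ultimately show "A \<in> {A. A \<subseteq> G \<and> card A = m \<and> x \<in> A}"
      using assms by auto
  qed
  moreover have "inj_on (insert x) {B. B \<subseteq> G - {x} \<and> card B = m - 1}"
    by (rule inj_onI) auto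
  ultimately have "card {A. A \<subseteq> G \<and> card A = m \<and> x \<in> A} = card {B. B \<subseteq> G - {x} \<and> card B = m - 1}"
    by (simp add: card_image)
  also have "\<dots> = (card G - 1) choose (m - 1)"
    using assms by (simp add: n_subsets)
  finally show ?thesis .
qed

text \<open>Double counting: a uniformly random \<open>m\<close>-subset of \<open>G\<close> contains on average
  \<open>m / card G\<close> times as many elements satisfying \<open>P\<close> as \<open>G\<close> does.\<close>
lemma sum_card_filter_subsets:
  assumes "finite G" "m \<ge> 1"
  shows "(\<Sum>A\<in>{A. A \<subseteq> G \<and> card A = m}. card {x \<in> A. P x}) * card G
       = m * (card G choose m) * card {x \<in> G. P x}"
proof -
  let ?\<A> = "{A. A \<subseteq> G \<and> card A = m}"
  have "finite ?\<A>"
    using assms(1) by (auto intro: finite_subset[of _ "Pow G"])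
  have "(\<Sum>A\<in>?\<A>. card {x \<in> A. P x}) = (\<Sum>A\<in>?\<A>. \<Sum>x\<in>G. of_bool (x \<in> A \<and> P x))"
    using assms(1) by (intro sum.cong refl) (auto simp: Int_def intro: arg_cong[where f = card])
  also have "\<dots> = (\<Sum>x\<in>G. \<Sum>A\<in>?\<A>. of_bool (x \<in> A \<and> P x))"
    by (rule sum.swap)
  also have "\<dots> = (\<Sum>x\<in>G. of_bool (P x) * ((card G - 1) choose (m - 1)))"
  proof (intro sum.cong refl)
    fix x assume "x \<in> G"
    then have "(\<Sum>A\<in>?\<A>. of_bool (x \<in> A \<and> P x)) = of_bool (P x) * card {A. A \<subseteq> G \<and> card A = m \<and> x \<in> A}"
      using \<open>finite ?\<A>\<close> by (auto simp: Int_def intro: arg_cong[where f = card])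
    with \<open>x \<in> G\<close> assms show "(\<Sum>A\<in>?\<A>. of_bool (x \<in> A \<and> P x)) = of_bool (P x) * ((card G - 1) choose (m - 1))"
      by (simp add: card_subsets_containing)
  qed
  also have "\<dots> = card {x \<in> G. P x} * ((card G - 1) choose (m - 1))"
    using assms(1) by (simp add: sum_distrib_right[symmetric] Int_def)
  finally show ?thesis
    using times_binomial_minus1_eq[of m "card G"] assms(2) by (simp add: algebra_simps)
qed

lemma card_subsets_RHA: "card (subsets_RHA k t) = (k (t - 1) * k (t - 1)) choose k t"
  unfolding subsets_RHA_def by (subst n_subsets) (simp_all add: card_cartesian_product)

lemma perplexities_pos: "perplexities k \<Longrightarrow> 0 < k n"
  by (simp add: perplexities_def)

lemma card_subsets_RHA_pos: "perplexities k \<Longrightarrow> t \<ge> 1 \<Longrightarrow> card (subsets_RHA k t) > 0"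
  by (simp add: card_subsets_RHA perplexities_def power2_eq_square)

text \<open>A uniformly random pair of a uniformly random \<open>A \<in> subsets_RHA k t\<close> has uniformly
  distributed coordinates.\<close>
lemma sum_branch_lex_enum_nth:
  assumes k: "perplexities k" and t: "t \<ge> 1"
  shows "(\<Sum>A\<in>subsets_RHA k t. \<Sum>c\<in>{1..k t}. of_bool (\<Psi> (branch left (lex_enum A ! (c - 1))))) * k (t - 1)
       = k t * card (subsets_RHA k t) * (\<Sum>c'\<in>{1..k (t - 1)}. of_bool (\<Psi> c'))"
proof -
  define K where "K = k (t - 1)"
  define G where "G = {1..K} \<times> {1..K}"
  have K: "K > 0" "k t \<ge> 1"
    using k by (simp_all add: K_def perplexities_def Suc_le_eq)
  have "(\<Sum>c\<in>{1..k t}. of_bool (\<Psi> (branch left (lex_enum A ! (c - 1))))) = card {x \<in> A. \<Psi> (branch left x)}"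
    if "A \<in> subsets_RHA k t" for A
  proof -
    have "(\<Sum>c\<in>{1..k t}. of_bool (\<Psi> (branch left (lex_enum A ! (c - 1)))))
        = (\<Sum>x\<in>A. of_bool (\<Psi> (branch left x)))"
      by (rule sum.reindex_bij_betw[OF bij_betw_lex_enum_nth[OF that]])
    also have "\<dots> = card {x \<in> A. \<Psi> (branch left x)}"
      using finite_if_subsets_RHA[OF that] by (simp add: Int_def)
    finally show ?thesis .
  qed
  then have "(\<Sum>A\<in>subsets_RHA k t. \<Sum>c\<in>{1..k t}. of_bool (\<Psi> (branch left (lex_enum A ! (c - 1))))) * card G
      = (\<Sum>A\<in>{A. A \<subseteq> G \<and> card A = k t}. card {x \<in> A. \<Psi> (branch left x)}) * card G"
    by (simp add: subsets_RHA_def G_def K_def)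
  also have "\<dots> = k t * card (subsets_RHA k t) * card {x \<in> G. \<Psi> (branch left x)}"
    using sum_card_filter_subsets[of G "k t" "\<lambda>x. \<Psi> (branch left x)"] K
    by (simp add: G_def card_subsets_RHA K_def card_cartesian_product)
  also have "card {x \<in> G. \<Psi> (branch left x)} = card {c' \<in> {1..K}. \<Psi> c'} * K"
  proof -
    have "{x \<in> G. \<Psi> (branch left x)} = (if left then {c' \<in> {1..K}. \<Psi> c'} \<times> {1..K} else {1..K} \<times> {c' \<in> {1..K}. \<Psi> c'})"
      by (auto simp: G_def branch_def)
    then show ?thesis
      by (simp add: card_cartesian_product)
  qed
  finally show ?thesis
    using K by (simp add: G_def K_def card_cartesian_product Int_def)
qed

text \<open>The possible values of \<open>(S\<^sub>1, \<dots>, S\<^sub>m, C\<^sub>m)\<close>; under \<^const>\<open>RHA_model\<close> they are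
  uniformly distributed.\<close>
definition configs :: "(nat \<Rightarrow> nat) \<Rightarrow> nat \<Rightarrow> ((nat \<Rightarrow> (nat \<times> nat) set) \<times> nat) set" where
  "configs k m = PiE {1..m} (subsets_RHA k) \<times> {1..k m}"

lemma finite_configs: "finite (configs k m)"
  unfolding configs_def by (intro finite_cartesian_product finite_PiE) (auto simp: finite_subsets_RHA)

lemma card_configs: "card (configs k m) = card (PiE {1..m} (subsets_RHA k)) * k m"
  by (simp add: configs_def card_cartesian_product)

lemma card_configs_pos: "perplexities k \<Longrightarrow> card (configs k m) > 0"
  by (simp add: card_configs card_PiE card_subsets_RHA_pos) (simp add: perplexities_def)

lemma card_configs_filter:
  "card {x \<in> configs k m. P (fst x) (snd x)}
     = (\<Sum>a\<in>PiE {1..m} (subsets_RHA k). \<Sum>c\<in>{1..k m}. of_bool (P a c))"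
proof -
  have "finite (PiE {1..m} (subsets_RHA k))"
    by (intro finite_PiE) (auto simp: finite_subsets_RHA)
  then have "card {x \<in> configs k m. P (fst x) (snd x)} = (\<Sum>x\<in>configs k m. of_bool (P (fst x) (snd x)))"
    using finite_configs by (simp add: Int_def)
  then show ?thesis
    by (simp add: configs_def sum.cartesian_product case_prod_beta del: sum_of_bool_eq)
qed

lemma sum_PiE_insert:
  assumes "x \<notin> I"
  shows "sum f (PiE (insert x I) T) = (\<Sum>y\<in>T x. \<Sum>g\<in>PiE I T. f (g(x := y)))"
  unfolding PiE_insert_eq
  by (subst sum.reindex[OF inj_combinator[OF assms]]) (simp add: sum.cartesian_product prod.case_distrib)

lemma card_configs_filter_descendant_Suc:
  assumes k: "perplexities k"
  shows "card {x \<in> configs k (n + Suc q). \<Phi> (restrict (fst x) {1..n}) (descendant (fst x) n (Suc q) (snd x) r)}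
           * k (n + q)
       = k (Suc (n + q)) * card (subsets_RHA k (Suc (n + q)))
           * card {x \<in> configs k (n + q). \<Phi> (restrict (fst x) {1..n}) (descendant (fst x) n q (snd x) (r mod 2 ^ q))}"
proof -
  define top where "top = Suc (n + q)"
  define \<Psi> where "\<Psi> g c' = \<Phi> (restrict g {1..n}) (descendant g n q c' (r mod 2 ^ q))" for g c'
  have top: "{1..n + Suc q} = insert top {1..n + q}" "top \<notin> {1..n + q}"
    by (auto simp: top_def)
  have "card {x \<in> configs k (n + Suc q). \<Phi> (restrict (fst x) {1..n}) (descendant (fst x) n (Suc q) (snd x) r)}
      = (\<Sum>y\<in>subsets_RHA k top. \<Sum>g\<in>PiE {1..n + q} (subsets_RHA k). \<Sum>c\<in>{1..k top}.
           of_bool (\<Psi> g (branch (r < 2 ^ q) (lex_enum y ! (c - 1)))))"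
  proof -
    have "restrict (g(top := y)) {1..n} = restrict g {1..n}"
      "descendant (g(top := y)) n q c' r' = descendant g n q c' r'" for g y c' r'
      by (auto simp: top_def intro!: restrict_ext descendant_cong)
    then show ?thesis
      unfolding card_configs_filter[of _ _ "\<lambda>a c. \<Phi> (restrict a {1..n}) (descendant a n (Suc q) c r)"]
        top(1) sum_PiE_insert[OF top(2)]
      by (simp add: \<Psi>_def top_def del: sum_of_bool_eq)
  qed
  also have "\<dots> = (\<Sum>g\<in>PiE {1..n + q} (subsets_RHA k). \<Sum>y\<in>subsets_RHA k top. \<Sum>c\<in>{1..k top}.
           of_bool (\<Psi> g (branch (r < 2 ^ q) (lex_enum y ! (c - 1)))))"
    by (rule sum.swap)
  finally have "card {x \<in> configs k (n + Suc q). \<Phi> (restrict (fst x) {1..n}) (descendant (fst x) n (Suc q) (snd x) r)}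
      * k (n + q) = (\<Sum>g\<in>PiE {1..n + q} (subsets_RHA k).
          k top * card (subsets_RHA k top) * (\<Sum>c'\<in>{1..k (n + q)}. of_bool (\<Psi> g c')))"
    using sum_branch_lex_enum_nth[OF k, of top] by (simp add: sum_distrib_right top_def)
  also have "\<dots> = k top * card (subsets_RHA k top) * card {x \<in> configs k (n + q). \<Psi> (fst x) (snd x)}"
    by (simp add: card_configs_filter sum_distrib_left)
  finally show ?thesis
    by (simp add: \<Psi>_def top_def)
qed

text \<open>Conditionally on the sets of levels \<open>1, \<dots>, n\<close>, the index at level \<open>n\<close> reached by
  descending from a uniformly random index at level \<open>n + q\<close> is uniformly distributed.\<close>
lemma card_configs_filter_descendant:
  assumes k: "perplexities k"
  shows "card {x \<in> configs k (n + q). \<Phi> (restrict (fst x) {1..n}) (descendant (fst x) n q (snd x) r)}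
           * card (configs k n)
       = card (configs k (n + q)) * card {x \<in> configs k n. \<Phi> (fst x) (snd x)}"
proof (induction q arbitrary: r)
  case 0
  have "{x \<in> configs k n. \<Phi> (restrict (fst x) {1..n}) (descendant (fst x) n 0 (snd x) r)}
      = {x \<in> configs k n. \<Phi> (fst x) (snd x)}"
    by (auto simp: configs_def)
  then show ?case
    unfolding add_0_right by (simp only: mult.commute)
next
  case (Suc q)
  let ?L = "card {x \<in> configs k (n + Suc q).
    \<Phi> (restrict (fst x) {1..n}) (descendant (fst x) n (Suc q) (snd x) r)}"
  let ?B = "card {x \<in> configs k n. \<Phi> (fst x) (snd x)}"
  let ?P = "k (Suc (n + q)) * card (subsets_RHA k (Suc (n + q)))"
  have card_step: "card (configs k (n + Suc q)) * k (n + q) = ?P * card (configs k (n + q))"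
    by (simp add: card_configs card_PiE atLeastAtMostSuc_conv)
  have "?L * card (configs k n) * k (n + q) = (?L * k (n + q)) * card (configs k n)"
    by (simp only: ac_simps)
  also have "\<dots> = ?P * (card {x \<in> configs k (n + q).
      \<Phi> (restrict (fst x) {1..n}) (descendant (fst x) n q (snd x) (r mod 2 ^ q))} * card (configs k n))"
    unfolding card_configs_filter_descendant_Suc[OF k, where \<Phi> = \<Phi> and n = n and q = q and r = r]
    by (simp only: mult.assoc)
  also have "\<dots> = card (configs k (n + Suc q)) * k (n + q) * ?B"
    unfolding Suc.IH card_step by (simp only: ac_simps)
  finally have "?L * card (configs k n) * k (n + q) = card (configs k (n + Suc q)) * ?B * k (n + q)"
    by (simp only: ac_simps)
  moreover have "k (n + q) \<noteq> 0"
    using perplexities_pos[OF k] by simp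
  ultimately show ?case
    by (rule mult_right_cancel[THEN iffD1, rotated])
qed

text \<open>For \<open>2\<^sup>p \<le> j < 2\<^sup>p\<^sup>+\<^sup>1\<close> the block \<open>X\<^sup>n\<^sub>j\<close> is \<open>block_string n p (j - 2\<^sup>p)\<close> applied to
  \<open>(S\<^sub>1, \<dots>, S\<^sub>n\<^sub>+\<^sub>p, C\<^sub>n\<^sub>+\<^sub>p)\<close>.\<close>
definition block_string :: "nat \<Rightarrow> nat \<Rightarrow> nat \<Rightarrow> (nat \<Rightarrow> (nat \<times> nat) set) \<times> nat \<Rightarrow> nat list" where
  "block_string n p r x = Ystr (fst x) n (descendant (fst x) n p (snd x) r)"

lemma card_block_string_fiber:
  assumes k: "perplexities k"
  shows "card {x \<in> configs k (n + p). block_string n p r x = y} * k n \<le> card (configs k (n + p))"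
proof -
  define F where "F = {x \<in> configs k n. Ystr (fst x) n (snd x) = y}"
  define P where "P = card (PiE {1..n} (subsets_RHA k))"
  have "block_string n p r x = y \<longleftrightarrow>
      Ystr (restrict (fst x) {1..n}) n (descendant (fst x) n p (snd x) r) = y" for x
    unfolding block_string_def by (subst Ystr_cong[where s' = "fst x"]) simp_all
  then have fiber: "card {x \<in> configs k (n + p). block_string n p r x = y} * card (configs k n)
      = card (configs k (n + p)) * card F"
    unfolding F_def using card_configs_filter_descendant[OF k, where \<Phi> = "\<lambda>a i. Ystr a n i = y" and q = p]
    by simp
  have "inj_on fst F"
  proof (rule inj_onI)
    fix x x' assume "x \<in> F" "x' \<in> F" "fst x = fst x'"
    moreover have "inj_on (Ystr (fst x) n) {1..k n}"
      using \<open>x \<in> F\<close> by (intro inj_on_Ystr) (auto simp: F_def configs_def)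
    ultimately show "x = x'"
      by (auto simp: F_def configs_def prod_eq_iff dest: inj_onD)
  qed
  moreover have "fst ` F \<subseteq> PiE {1..n} (subsets_RHA k)"
    by (auto simp: F_def configs_def)
  moreover have "finite (PiE {1..n} (subsets_RHA k))"
    by (intro finite_PiE) (auto simp: finite_subsets_RHA)
  ultimately have "card F \<le> P"
    unfolding P_def by (rule card_inj_on_le)
  then have "card {x \<in> configs k (n + p). block_string n p r x = y} * k n * P \<le> card (configs k (n + p)) * P"
    using fiber by (simp add: card_configs P_def algebra_simps)
  moreover have "P > 0"
    using k by (simp add: P_def card_PiE card_subsets_RHA_pos)
  ultimately show ?thesis
    by simp
qed

lemma card_block_string_image:
  assumes "l \<le> n"
  shows "card (block_string n p r ` configs k (n + p)) \<le> card (PiE {1..l} (subsets_RHA k)) * k l ^ 2 ^ (n - l)"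
proof -
  define N where "N = (2::nat) ^ (n - l)"
  define G where "G x = concat (map (\<lambda>i. Ystr (fst x) l (snd x i)) [0..<N])"
    for x :: "(nat \<Rightarrow> (nat \<times> nat) set) \<times> (nat \<Rightarrow> nat)"
  define X where "X = PiE {1..l} (subsets_RHA k) \<times> PiE {0..<N} (\<lambda>_. {1..k l})"
  have "block_string n p r ` configs k (n + p) \<subseteq> G ` X"
  proof
    fix y assume "y \<in> block_string n p r ` configs k (n + p)"
    then obtain a c where a: "a \<in> PiE {1..n + p} (subsets_RHA k)" and c: "c \<in> {1..k (n + p)}"
      and y: "y = block_string n p r (a, c)"
      by (auto simp: configs_def)
    define i where "i = descendant a n p c r"
    have i: "i \<in> {1..k n}"
      unfolding i_def using a c by (intro descendant_range) auto
    define v where "v = restrict (descendant a l (n - l) i) {0..<N}"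
    have "descendant a l (n - l) i r' \<in> {1..k l}" for r'
      using a i assms by (intro descendant_range) auto
    then have "v \<in> PiE {0..<N} (\<lambda>_. {1..k l})"
      unfolding v_def by auto
    moreover have "restrict a {1..l} \<in> PiE {1..l} (subsets_RHA k)"
      using a assms by auto
    moreover have "y = G (restrict a {1..l}, v)"
    proof -
      have "y = concat (map (\<lambda>r. Ystr a l (descendant a l (n - l) i r)) [0..<N])"
        unfolding y block_string_def i_def N_def by (simp add: Ystr_eq_concat_descendants[OF assms])
      also have "\<dots> = G (restrict a {1..l}, v)"
      proof -
        have "Ystr (restrict a {1..l}) l i' = Ystr a l i'" for i'
          by (rule Ystr_cong) simp
        then show ?thesis
          unfolding G_def v_def by (auto intro!: arg_cong[where f = concat] map_cong)
      qed
      finally show ?thesis .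
    qed
    ultimately show "y \<in> G ` X"
      unfolding X_def by blast
  qed
  moreover have "finite X"
    unfolding X_def by (intro finite_cartesian_product finite_PiE) (auto simp: finite_subsets_RHA)
  ultimately have "card (block_string n p r ` configs k (n + p)) \<le> card X"
    by (meson card_image_le card_mono finite_imageI le_trans)
  then show ?thesis
    by (simp add: X_def N_def card_cartesian_product card_PiE)
qed

section \<open>Entropy of a function of a uniform random variable\<close>

text \<open>The entropy of \<open>F c\<close> for \<open>c\<close> uniformly distributed on \<open>U\<close>.\<close>
definition uniform_image_entropy :: "'c set \<Rightarrow> ('c \<Rightarrow> 'b) \<Rightarrow> real" where
  "uniform_image_entropy U F = (\<Sum>c\<in>U. - ln (card {c' \<in> U. F c' = F c} / card U)) / card U"

lemma entropy_nat_eq_uniform_image_entropy: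
  fixes g :: "'a \<Rightarrow> 'c" and F :: "'c \<Rightarrow> 'b" and X :: "'a \<Rightarrow> 'b"
  assumes "prob_space M" and "finite U"
    and g: "\<And>\<omega>. \<omega> \<in> space M \<Longrightarrow> g \<omega> \<in> U"
    and sets: "\<And>c. c \<in> U \<Longrightarrow> {\<omega> \<in> space M. g \<omega> = c} \<in> sets M"
    and uniform: "\<And>c. c \<in> U \<Longrightarrow> measure M {\<omega> \<in> space M. g \<omega> = c} = 1 / card U"
    and X: "\<And>\<omega>. \<omega> \<in> space M \<Longrightarrow> X \<omega> = F (g \<omega>)"
  shows "entropy_nat M X = uniform_image_entropy U F"
proof -
  interpret prob_space M
    by fact
  define E where "E c = {\<omega> \<in> space M. g \<omega> = c}" for c
  define \<phi> where "\<phi> c = - ln (card {c' \<in> U. F c' = F c} / card U)" for c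
  have fiber: "{\<omega>' \<in> space M. X \<omega>' = X \<omega>} = (\<Union>c\<in>{c' \<in> U. F c' = F (g \<omega>)}. E c)"
    if "\<omega> \<in> space M" for \<omega>
    using X g that by (auto simp: E_def)
  have "measure M {\<omega>' \<in> space M. X \<omega>' = X \<omega>} = card {c' \<in> U. F c' = F (g \<omega>)} / card U"
    if "\<omega> \<in> space M" for \<omega>
    unfolding fiber[OF that] using \<open>finite U\<close> sets uniform
    by (subst finite_measure_finite_Union) (auto simp: E_def disjoint_family_on_def)
  moreover have "(\<Sum>c\<in>U. \<phi> c * indicator (E c) \<omega>) = \<phi> (g \<omega>)" if "\<omega> \<in> space M" for \<omega>
  proof -
    have "(\<Sum>c\<in>U. \<phi> c * indicator (E c) \<omega>) = (\<Sum>c\<in>U. if c = g \<omega> then \<phi> c else 0)"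
      using that by (intro sum.cong) (auto simp: E_def)
    then show ?thesis
      using g[OF that] \<open>finite U\<close> by simp
  qed
  ultimately have "entropy_nat M X = (\<integral>\<omega>. (\<Sum>c\<in>U. \<phi> c * indicator (E c) \<omega>) \<partial>M)"
    unfolding entropy_nat_def \<phi>_def by (intro Bochner_Integration.integral_cong) simp_all
  also have "\<dots> = (\<Sum>c\<in>U. \<phi> c * measure M (E c))"
  proof -
    have "E c \<inter> space M = E c" for c
      by (auto simp: E_def)
    then show ?thesis
      using sets by (subst Bochner_Integration.integral_sum)
        (auto simp: E_def less_top[symmetric])
  qed
  also have "\<dots> = uniform_image_entropy U F"
    using uniform by (simp add: E_def \<phi>_def uniform_image_entropy_def sum_divide_distrib)
  finally show ?thesis .
qed

lemma ln_le_uniform_image_entropy: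
  assumes "finite U" "U \<noteq> {}" "K > 0"
    and fiber: "\<And>c. c \<in> U \<Longrightarrow> card {c' \<in> U. F c' = F c} * K \<le> card U"
  shows "ln K \<le> uniform_image_entropy U F"
proof -
  have "ln K \<le> - ln (card {c' \<in> U. F c' = F c} / card U)" if "c \<in> U" for c
  proof -
    define q where "q = card {c' \<in> U. F c' = F c}"
    have "q > 0"
      using assms(1) that by (auto simp: q_def card_gt_0_iff)
    moreover have "real q * K \<le> card U"
      using fiber[OF that] unfolding q_def by (simp flip: of_nat_mult)
    ultimately have "real K \<le> card U / q"
      by (simp add: field_simps)
    then have "ln K \<le> ln (card U / q)"
      using assms(3) by simp
    also have "\<dots> = - ln (q / card U)"
      using \<open>q > 0\<close> assms(1,2) by (simp add: ln_div card_gt_0_iff)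
    finally show ?thesis
      unfolding q_def .
  qed
  then have "card U * ln K \<le> (\<Sum>c\<in>U. - ln (card {c' \<in> U. F c' = F c} / card U))"
    using sum_mono[of U "\<lambda>_. ln K"] by simp
  then show ?thesis
    using assms(1,2) by (simp add: uniform_image_entropy_def card_gt_0_iff field_simps)
qed

lemma sum_inverse_card_fiber:
  assumes "finite U"
  shows "(\<Sum>c\<in>U. 1 / real (card {c' \<in> U. F c' = F c})) = card (F ` U)"
proof -
  have "(\<Sum>c\<in>U. 1 / real (card {c' \<in> U. F c' = F c}))
      = (\<Sum>y\<in>F ` U. \<Sum>c\<in>{c' \<in> U. F c' = y}. 1 / real (card {c' \<in> U. F c' = y}))"
    by (subst sum.image_gen[OF assms]) (auto intro!: sum.cong)
  also have "\<dots> = (\<Sum>y\<in>F ` U. 1)"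
    using assms by (intro sum.cong refl) (auto simp: card_gt_0_iff)
  finally show ?thesis
    by simp
qed

text \<open>Gibbs' inequality: apply \<open>ln x \<le> x - 1\<close> to \<open>x = card U / (card (fiber of c) * B)\<close>.\<close>
lemma uniform_image_entropy_le_ln:
  assumes "finite U" "U \<noteq> {}" "card (F ` U) \<le> B"
  shows "uniform_image_entropy U F \<le> ln B"
proof -
  define N where "N = real (card U)"
  define q where "q c = real (card {c' \<in> U. F c' = F c})" for c
  have N: "N > 0"
    using assms by (simp add: N_def card_gt_0_iff)
  have q: "q c > 0" if "c \<in> U" for c
    using assms(1) that by (auto simp: q_def card_gt_0_iff)
  have B: "real B > 0"
    using assms by (metis card_0_eq finite_imageI gr0I image_is_empty le_zero_eq of_nat_0_less_iff)
  have "- ln (q c / N) - ln B \<le> N / (q c * B) - 1" if "c \<in> U" for c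
  proof -
    have "- ln (q c / N) - ln B = ln (N / (q c * B))"
      using N q[OF that] B by (simp add: ln_div ln_mult)
    also have "\<dots> \<le> N / (q c * B) - 1"
      using N q[OF that] B by (intro ln_le_minus_one) simp
    finally show ?thesis .
  qed
  then have "(\<Sum>c\<in>U. - ln (q c / N) - ln B) \<le> (\<Sum>c\<in>U. N / (q c * B) - 1)"
    by (rule sum_mono)
  also have "\<dots> = N / B * (\<Sum>c\<in>U. 1 / q c) - N"
    by (simp add: sum_subtractf sum_distrib_left N_def mult.commute)
  also have "\<dots> = N / B * card (F ` U) - N"
    unfolding q_def sum_inverse_card_fiber[OF assms(1)] ..
  also have "\<dots> \<le> 0"
    using assms(3) N B by (simp add: field_simps)
  finally have "(\<Sum>c\<in>U. - ln (q c / N)) \<le> N * ln B"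
    by (simp add: sum_subtractf N_def)
  then show ?thesis
    using N by (simp add: uniform_image_entropy_def q_def N_def field_simps)
qed

section \<open>The entropy of the blocks \<open>X\<^sup>n\<^sub>j\<close>\<close>

lemma RHA_model_config_event:
  assumes md: "RHA_model M k S C" and a: "a \<in> PiE {1..m} (subsets_RHA k)" and c: "c \<in> {1..k m}"
  defines "E \<equiv> {\<omega> \<in> space M. (\<forall>t\<in>{1..m}. S t \<omega> = a t) \<and> C m \<omega> = c}"
  shows "E \<in> sets M" and "measure M E = 1 / card (configs k m)"
proof -
  interpret prob_space M
    using md by (simp add: RHA_model_def)
  define Y where "Y i \<omega> = (case i of Inl n \<Rightarrow> Inl (S n \<omega>) | Inr n \<Rightarrow> Inr (C n \<omega>))" for i \<omega>
  define A where "A i = (case i of Inl t \<Rightarrow> {Inl (a t)} | Inr _ \<Rightarrow> {Inr c})" for i :: "nat + nat"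
  define J :: "(nat + nat) set" where "J = Inl ` {1..m} \<union> {Inr m}"
  have "indep_vars (\<lambda>_. count_space UNIV) Y (Inl ` {1..} \<union> range Inr)"
    using md unfolding RHA_model_def Y_def by blast
  then have indep: "indep_vars (\<lambda>_. count_space UNIV) Y J"
    by (rule indep_vars_subset) (auto simp: J_def)
  have J: "finite J" "J \<noteq> {}"
    by (auto simp: J_def)
  have E: "E = (\<Inter>i\<in>J. Y i -` A i \<inter> space M)"
    by (auto simp: E_def J_def Y_def A_def)
  have sets: "Y i -` A i \<inter> space M \<in> sets M" if "i \<in> J" for i
    using indep that unfolding indep_vars_def by (auto intro: measurable_sets)
  then show "E \<in> sets M"
    unfolding E using J by (intro sets.finite_INT) auto
  have S: "prob (Y (Inl t) -` A (Inl t) \<inter> space M) = 1 / card (subsets_RHA k t)" if "t \<in> {1..m}" for t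
  proof -
    have "Y (Inl t) -` A (Inl t) \<inter> space M = {\<omega> \<in> space M. S t \<omega> = a t}"
      by (auto simp: Y_def A_def)
    moreover have "a t \<in> subsets_RHA k t"
      using a that by auto
    moreover have "\<forall>A\<in>subsets_RHA k t. prob {\<omega> \<in> space M. S t \<omega> = A} = 1 / card (subsets_RHA k t)"
      using md that by (simp add: RHA_model_def)
    ultimately show ?thesis
      by simp
  qed
  have C: "prob (Y (Inr m) -` A (Inr m) \<inter> space M) = 1 / k m"
  proof -
    have "Y (Inr m) -` A (Inr m) \<inter> space M = {\<omega> \<in> space M. C m \<omega> = c}"
      by (auto simp: Y_def A_def)
    with md c show ?thesis
      unfolding RHA_model_def by auto
  qed
  have "prob E = (\<Prod>i\<in>J. prob (Y i -` A i \<inter> space M))"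
    unfolding E by (rule indep_varsD_finite[OF indep J(2,1)]) simp
  also have "\<dots> = (\<Prod>t\<in>{1..m}. prob (Y (Inl t) -` A (Inl t) \<inter> space M)) * prob (Y (Inr m) -` A (Inr m) \<inter> space M)"
    unfolding J_def by (subst prod.union_disjoint) (auto simp: prod.reindex)
  also have "\<dots> = 1 / card (configs k m)"
    by (simp add: S C card_configs card_PiE prod_dividef)
  finally show "prob E = 1 / card (configs k m)" .
qed

lemma entropy_nat_RHA_block:
  assumes k: "perplexities k" and md: "RHA_model M k S C" and j: "2 ^ p \<le> j" "j < 2 ^ Suc p"
  shows "entropy_nat M (\<lambda>\<omega>. RHA_block (\<lambda>m. S m \<omega>) (\<lambda>m. C m \<omega>) n j)
       = uniform_image_entropy (configs k (n + p)) (block_string n p (j - 2 ^ p))"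
proof -
  define g where "g \<omega> = (restrict (\<lambda>t. S t \<omega>) {1..n + p}, C (n + p) \<omega>)" for \<omega>
  have event: "{\<omega> \<in> space M. g \<omega> = x} = {\<omega> \<in> space M. (\<forall>t\<in>{1..n + p}. S t \<omega> = fst x t) \<and> C (n + p) \<omega> = snd x}"
    if "x \<in> configs k (n + p)" for x
    using that by (auto simp: g_def configs_def restrict_def PiE_def extensional_def fun_eq_iff)
  show ?thesis
  proof (rule entropy_nat_eq_uniform_image_entropy)
    show "prob_space M"
      using md by (simp add: RHA_model_def)
    show "g \<omega> \<in> configs k (n + p)" if "\<omega> \<in> space M" for \<omega>
      using md that by (auto simp: RHA_model_def g_def configs_def)
    show "{\<omega> \<in> space M. g \<omega> = x} \<in> sets M" "measure M {\<omega> \<in> space M. g \<omega> = x} = 1 / card (configs k (n + p))"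
      if "x \<in> configs k (n + p)" for x
      using that RHA_model_config_event[OF md, of "fst x" "n + p" "snd x"] by (auto simp: event configs_def)
    show "RHA_block (\<lambda>m. S m \<omega>) (\<lambda>m. C m \<omega>) n j = block_string n p (j - 2 ^ p) (g \<omega>)" for \<omega>
    proof -
      have "Ystr (\<lambda>t. S t \<omega>) n i = Ystr (fst (g \<omega>)) n i"
        "descendant (\<lambda>t. S t \<omega>) n p i r = descendant (fst (g \<omega>)) n p i r" for i r
        by (auto simp: g_def intro: Ystr_cong descendant_cong)
      then show ?thesis
        by (simp add: RHA_block_eq_Ystr_descendant[OF j] block_string_def g_def)
    qed
  qed (fact finite_configs)
qed

lemma ln_perplexity_le_entropy_nat_RHA_block:
  assumes k: "perplexities k" and md: "RHA_model M k S C" and j: "2 ^ p \<le> j" "j < 2 ^ Suc p"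
  shows "ln (k n) \<le> entropy_nat M (\<lambda>\<omega>. RHA_block (\<lambda>m. S m \<omega>) (\<lambda>m. C m \<omega>) n j)"
  unfolding entropy_nat_RHA_block[OF k md j]
proof (rule ln_le_uniform_image_entropy[OF finite_configs])
  show "configs k (n + p) \<noteq> {}"
    using card_configs_pos[OF k, of "n + p"] by (simp add: card_gt_0_iff)
  show "k n > 0"
    using k by (simp add: perplexities_def)
qed (rule card_block_string_fiber[OF k])

lemma entropy_nat_RHA_block_le:
  assumes k: "perplexities k" and md: "RHA_model M k S C" and j: "2 ^ p \<le> j" "j < 2 ^ Suc p"
    and "l \<le> n"
  shows "entropy_nat M (\<lambda>\<omega>. RHA_block (\<lambda>m. S m \<omega>) (\<lambda>m. C m \<omega>) n j)
     \<le> ln (card (PiE {1..l} (subsets_RHA k))) + 2 ^ (n - l) * ln (k l)"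
proof -
  have "uniform_image_entropy (configs k (n + p)) (block_string n p (j - 2 ^ p))
      \<le> ln (card (PiE {1..l} (subsets_RHA k)) * k l ^ 2 ^ (n - l))"
    using card_configs_pos[OF k, of "n + p"] card_block_string_image[OF \<open>l \<le> n\<close>]
    by (intro uniform_image_entropy_le_ln[OF finite_configs]) (simp_all add: card_gt_0_iff)
  also have "\<dots> = ln (card (PiE {1..l} (subsets_RHA k))) + 2 ^ (n - l) * ln (k l)"
  proof -
    have "0 < card (PiE {1..l} (subsets_RHA k))"
      using k by (simp add: card_PiE card_subsets_RHA_pos)
    then show ?thesis
      using perplexities_pos[OF k, of l] by (simp add: ln_mult ln_realpow)
  qed
  finally show ?thesis
    unfolding entropy_nat_RHA_block[OF k md j] .
qed

section \<open>The entropy rate\<close>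

lemma decseq_ln_perplexity_rate:
  assumes "perplexities k"
  shows "decseq (\<lambda>l. ln (k l) / 2 ^ l)"
proof (rule decseq_SucI)
  fix l
  have "0 < k l" "0 < k (Suc l)" "k (Suc l) \<le> k l ^ 2"
    using assms by (auto simp: perplexities_def dest: spec[of _ "Suc l"])
  then have "ln (k (Suc l)) \<le> ln (real (k l) ^ 2)"
    by (subst ln_le_cancel_iff) (simp_all flip: of_nat_power)
  also have "\<dots> = 2 * ln (k l)"
    using assms by (simp add: ln_realpow perplexities_def)
  finally show "ln (k (Suc l)) / 2 ^ Suc l \<le> ln (k l) / 2 ^ l"
    by (simp add: field_simps)
qed

lemma cINF_eq_if_asymptotically_between:
  fixes a h :: "nat \<Rightarrow> real"
  assumes "bdd_below (range a)" and lower: "\<And>n. a n \<le> h n"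
    and upper: "\<And>l. \<exists>e. e \<longlonglongrightarrow> 0 \<and> (\<forall>n\<ge>l. h n \<le> a l + e n)"
  shows "(INF n. h n) = (INF l. a l)"
proof (rule antisym)
  have "bdd_below (range h)"
    using assms(1) lower by (auto simp: bdd_below_def intro: order_trans)
  show "(INF n. h n) \<le> (INF l. a l)"
  proof (rule cINF_greatest)
    fix l
    obtain e where e: "e \<longlonglongrightarrow> 0" "\<forall>n\<ge>l. h n \<le> a l + e n"
      using upper by blast
    have "\<forall>n\<ge>l. (INF n. h n) \<le> a l + e n"
      using e(2) cINF_lower[OF \<open>bdd_below (range h)\<close>] by (blast intro: order_trans)
    then show "(INF n. h n) \<le> a l"
      using LIMSEQ_le_const[OF tendsto_add_const_iff[THEN iffD2, OF e(1)]] by auto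
  qed simp
  show "(INF l. a l) \<le> (INF n. h n)"
    using cINF_lower[OF assms(1)] lower by (blast intro: cINF_greatest order_trans)
qed

theorem proposition9:
  fixes M :: "'a measure" and k :: "nat \<Rightarrow> nat"
    and S :: "nat \<Rightarrow> 'a \<Rightarrow> (nat \<times> nat) set" and C :: "nat \<Rightarrow> 'a \<Rightarrow> nat" and j :: nat
  assumes "perplexities k"
    and "RHA_model M k S C"
    and "j \<ge> 1"
  shows "(INF n. entropy_nat M (\<lambda>\<omega>. RHA_block (\<lambda>m. S m \<omega>) (\<lambda>m. C m \<omega>) n j) / 2 ^ n)
           = (INF l. ln (real (k l)) / 2 ^ l)
       \<and> (\<lambda>l. ln (real (k l)) / 2 ^ l) \<longlonglongrightarrow> (INF l. ln (real (k l)) / 2 ^ l)"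
proof
  note k = assms(1) and md = assms(2)
  obtain p where j: "2 ^ p \<le> j" "j < 2 ^ Suc p"
    using ex_power_ivl1[of 2 j] assms(3) by auto
  have "bdd_below (range (\<lambda>l. ln (real (k l)) / 2 ^ l))"
    using perplexities_pos[OF k] by (intro bdd_belowI[of _ 0]) (auto simp: Suc_le_eq)
  then show "(\<lambda>l. ln (real (k l)) / 2 ^ l) \<longlonglongrightarrow> (INF l. ln (real (k l)) / 2 ^ l)"
    by (rule LIMSEQ_decseq_INF[OF _ decseq_ln_perplexity_rate[OF k]])
  show "(INF n. entropy_nat M (\<lambda>\<omega>. RHA_block (\<lambda>m. S m \<omega>) (\<lambda>m. C m \<omega>) n j) / 2 ^ n)
      = (INF l. ln (real (k l)) / 2 ^ l)"
  proof (rule cINF_eq_if_asymptotically_between[OF \<open>bdd_below _\<close>])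
    show "ln (k n) / 2 ^ n \<le> entropy_nat M (\<lambda>\<omega>. RHA_block (\<lambda>m. S m \<omega>) (\<lambda>m. C m \<omega>) n j) / 2 ^ n" for n
      using ln_perplexity_le_entropy_nat_RHA_block[OF k md j] by (simp add: divide_right_mono)
    fix l
    let ?P = "card (PiE {1..l} (subsets_RHA k))"
    have "entropy_nat M (\<lambda>\<omega>. RHA_block (\<lambda>m. S m \<omega>) (\<lambda>m. C m \<omega>) n j) / 2 ^ n
        \<le> ln (k l) / 2 ^ l + ln ?P / 2 ^ n" if "l \<le> n" for n
      using divide_right_mono[OF entropy_nat_RHA_block_le[OF k md j that], of "2 ^ n"] that
      by (simp add: add_divide_distrib power_diff)
    then show "\<exists>e. e \<longlonglongrightarrow> 0 \<and> (\<forall>n\<ge>l. entropy_nat M (\<lambda>\<omega>. RHA_block (\<lambda>m. S m \<omega>) (\<lambda>m. C m \<omega>) n j) / 2 ^ n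
        \<le> ln (k l) / 2 ^ l + e n)"
      using LIMSEQ_divide_realpow_zero[of 2 "ln ?P"] by auto
  qed
qed

end
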